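(* Let $n>3$. Let $U_{2,2}$ be the irreducible $SL_n$-subrepresentation of the space of polynomial functions on $\mathfrak{sl}_n$ generated by the $2\times2$ minor $Z\mapsto Z_{1,n}Z_{2,n-1}-Z_{1,n-1}Z_{2,n}$. Then for every $f\in U_{2,2}$ and every $Z\in\overline{\mathbb{S}_{\mathrm{min}}(\mathfrak{sl}_n)}$ we have $f(Z)=0$.
   Context: $SL_n$ acts on functions on $\mathfrak{sl}_n$ via the adjoint action; the span of all $2\times2$ minors $Z_{i,j}Z_{k,l}-Z_{i,l}Z_{k,j}$ is an $SL_n$-representation isomorphic to $\wedge^2E^*\otimes\wedge^2E$ with $E=\mathbb{C}^n$, which decomposes as $V_{1,2}\oplus U_{2,2}$. The sheet closure is $$\overline{\mathbb{S}_{\mathrm{min}}(\mathfrak{sl}_n)}=\left\{R\begin{pmatrix}(n-1)Y_1 & Y_2&\cdots&Y_n\\ 0&-Y_1&&0\\ \vdots&&\ddots&\vdots\\ 0&\cdots&\cdots&-Y_1\end{pmatrix}R^{-1}\ \middle|\ Y_i\in\mathbb{C},\ R\in SL_n\right\},$$ the closure of the sheet of $\mathfrak{sl}_n$ containing the minimal nilpotent orbit. *)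

theory Defs
  imports "Jordan_Normal_Form.Determinant"
begin

(* 0-based indices: entry (i,j) here corresponds to Z_{i+1,j+1} in the paper *)

definition SL :: "nat \<Rightarrow> complex mat set" where
  "SL n = {g. g \<in> carrier_mat n n \<and> det g = 1}"

definition minor22 :: "nat \<Rightarrow> complex mat \<Rightarrow> complex" where
  "minor22 n Z = Z $$ (0, n - 1) * Z $$ (1, n - 2) - Z $$ (0, n - 2) * Z $$ (1, n - 1)"

(* the SL_n-subrepresentation generated by minor22 under (g.f)(Z) = f(g^-1 Z g):
   the linear span of the orbit {g.minor22 | g \<in> SL_n} *)
definition U22 :: "nat \<Rightarrow> (complex mat \<Rightarrow> complex) set" where
  "U22 n = {f. \<exists>(k::nat) (c::nat \<Rightarrow> complex) (g::nat \<Rightarrow> complex mat) (h::nat \<Rightarrow> complex mat).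
      (\<forall>i<k. g i \<in> SL n \<and> h i \<in> carrier_mat n n \<and> g i * h i = 1\<^sub>m n) \<and>
      f = (\<lambda>Z. \<Sum>i<k. c i * minor22 n (h i * Z * g i))}"

(* the matrix with first row ((n-1)Y_1, Y_2, ..., Y_n) and diagonal -Y_1 below;
   Y i here is Y_{i+1} in the paper *)
definition sheet_mat :: "nat \<Rightarrow> (nat \<Rightarrow> complex) \<Rightarrow> complex mat" where
  "sheet_mat n Y = mat n n (\<lambda>(i, j).
      if i = 0 \<and> j = 0 then (of_nat n - 1) * Y 0
      else if i = 0 then Y j
      else if i = j then - Y 0
      else 0)"

definition sheet_min_closure :: "nat \<Rightarrow> complex mat set" where
  "sheet_min_closure n = {R * sheet_mat n Y * S | R S Y.
      R \<in> SL n \<and> S \<in> carrier_mat n n \<and> R * S = 1\<^sub>m n}"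

end

theory Submission
  imports Defs
begin

text \<open>The sheet matrix is the scalar matrix \<open>-Y\<^sub>1 I\<close> plus the rank-one matrix \<open>e\<^sub>1 w\<^sup>T\<close>,
  \<open>w = (n Y\<^sub>1, Y\<^sub>2, \<dots>, Y\<^sub>n)\<close>. Conjugation keeps this shape, so off the diagonal every
  point \<open>Z\<close> of the sheet closure is rank one, \<open>Z\<^sub>i\<^sub>j = u\<^sub>i v\<^sub>j\<close>. For \<open>n > 3\<close> the minor
  on rows \<open>1, 2\<close> and columns \<open>n-1, n\<close> only sees off-diagonal entries, hence vanishes
  on the sheet closure; since the sheet closure is stable under conjugation, so does
  every translate of the minor and therefore all of \<open>U\<^sub>2\<^sub>,\<^sub>2\<close>.\<close>

lemma minor22_eq_0_if_offdiag_rank_one: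
  assumes "n > 3"
    and offdiag: "\<And>i j. i < n \<Longrightarrow> j < n \<Longrightarrow> i \<noteq> j \<Longrightarrow> Z $$ (i, j) = u i * v j"
  shows "minor22 n Z = 0"
  using assms unfolding minor22_def by (simp add: offdiag)

lemma conj_scalar_plus_rank_one:
  fixes A B u v :: "'a :: comm_ring_1 mat"
  assumes A: "A \<in> carrier_mat n n" and B: "B \<in> carrier_mat n n"
    and u: "u \<in> carrier_mat n 1" and v: "v \<in> carrier_mat 1 n"
    and AB: "A * B = 1\<^sub>m n"
  shows "A * (c \<cdot>\<^sub>m 1\<^sub>m n + u * v) * B = c \<cdot>\<^sub>m 1\<^sub>m n + (A * u) * (v * B)"
proof -
  have uv: "u * v \<in> carrier_mat n n" using u v by simp
  have "A * (c \<cdot>\<^sub>m 1\<^sub>m n + u * v) = A * (c \<cdot>\<^sub>m 1\<^sub>m n) + A * (u * v)"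
    using A uv by (intro mult_add_distrib_mat) auto
  also have "A * (c \<cdot>\<^sub>m 1\<^sub>m n) = c \<cdot>\<^sub>m A"
    using A by (simp add: mult_smult_distrib[OF A one_carrier_mat])
  finally have "A * (c \<cdot>\<^sub>m 1\<^sub>m n + u * v) * B = (c \<cdot>\<^sub>m A + A * (u * v)) * B"
    by simp
  also have "\<dots> = c \<cdot>\<^sub>m A * B + A * (u * v) * B"
    using A B uv by (intro add_mult_distrib_mat) auto
  also have "\<dots> = c \<cdot>\<^sub>m (A * B) + (A * u) * (v * B)"
    using mult_smult_assoc_mat[OF A B] assoc_mult_mat[OF A u v]
      assoc_mult_mat[OF mult_carrier_mat[OF A u] v B] by simp
  finally show ?thesis using AB by simp
qed

lemma sheet_mat_eq_scalar_plus_rank_one: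
  "sheet_mat n Y = (- Y 0) \<cdot>\<^sub>m 1\<^sub>m n
     + mat n 1 (\<lambda>(i, _). if i = 0 then 1 else 0)
       * mat 1 n (\<lambda>(_, j). if j = 0 then of_nat n * Y 0 else Y j)"
  by (rule eq_matI) (auto simp: sheet_mat_def scalar_prod_def algebra_simps)

lemma minor22_conj_sheet_mat:
  assumes "n > 3"
    and A: "A \<in> carrier_mat n n" and B: "B \<in> carrier_mat n n" and AB: "A * B = 1\<^sub>m n"
  shows "minor22 n (A * sheet_mat n Y * B) = 0"
proof -
  define u :: "complex mat" where "u = A * mat n 1 (\<lambda>(i, _). if i = 0 then 1 else 0)"
  define v :: "complex mat" where
    "v = mat 1 n (\<lambda>(_, j). if j = 0 then of_nat n * Y 0 else Y j) * B"
  have u: "u \<in> carrier_mat n 1" and v: "v \<in> carrier_mat 1 n"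
    using A B by (auto simp: u_def v_def)
  have conj: "A * sheet_mat n Y * B = (- Y 0) \<cdot>\<^sub>m 1\<^sub>m n + u * v"
    unfolding sheet_mat_eq_scalar_plus_rank_one u_def v_def
    by (rule conj_scalar_plus_rank_one[OF A B _ _ AB]) auto
  have "(A * sheet_mat n Y * B) $$ (i, j) = u $$ (i, 0) * v $$ (0, j)"
    if "i < n" "j < n" "i \<noteq> j" for i j
    using that u v by (simp add: conj scalar_prod_def)
  then show ?thesis
    by (rule minor22_eq_0_if_offdiag_rank_one[OF \<open>n > 3\<close>])
qed

lemma minor22_sheet_min_closure:
  assumes "n > 3" and "Z \<in> sheet_min_closure n"
  shows "minor22 n Z = 0"
proof -
  obtain R S Y where "Z = R * sheet_mat n Y * S" and "R \<in> SL n"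
    and "S \<in> carrier_mat n n" and "R * S = 1\<^sub>m n"
    using assms(2) unfolding sheet_min_closure_def by blast
  then show ?thesis
    using minor22_conj_sheet_mat[OF assms(1)] by (simp add: SL_def)
qed

lemma sheet_min_closure_conj:
  assumes Z: "Z \<in> sheet_min_closure n"
    and g: "g \<in> SL n" and h: "h \<in> carrier_mat n n" and gh: "g * h = 1\<^sub>m n"
  shows "h * Z * g \<in> sheet_min_closure n"
proof -
  obtain R S Y where Z_eq: "Z = R * sheet_mat n Y * S" and R: "R \<in> SL n"
    and S: "S \<in> carrier_mat n n" and RS: "R * S = 1\<^sub>m n"
    using Z unfolding sheet_min_closure_def by blast
  have Rc: "R \<in> carrier_mat n n" and gc: "g \<in> carrier_mat n n"
    using R g by (auto simp: SL_def)
  have M: "sheet_mat n Y \<in> carrier_mat n n" by (simp add: sheet_mat_def)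
  have "det g * det h = 1"
    using det_mult[OF gc h] gh by simp
  then have "det h = 1" using g by (simp add: SL_def)
  then have hR: "h * R \<in> SL n"
    using h Rc R by (simp add: SL_def det_mult)
  have "(h * R) * (S * g) = h * R * S * g"
    using assoc_mult_mat[OF mult_carrier_mat[OF h Rc] S gc] by (rule sym)
  also have "\<dots> = h * (R * S) * g"
    by (simp only: assoc_mult_mat[OF h Rc S])
  also have "\<dots> = 1\<^sub>m n"
    using RS h gc gh mat_mult_left_right_inverse[OF gc h gh] by simp
  finally have inv: "(h * R) * (S * g) = 1\<^sub>m n" .
  have "h * Z * g = h * R * sheet_mat n Y * S * g"
    unfolding Z_eq
    by (simp only: assoc_mult_mat[OF h mult_carrier_mat[OF Rc M] S, symmetric]
        assoc_mult_mat[OF h Rc M, symmetric])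
  also have "\<dots> = (h * R) * sheet_mat n Y * (S * g)"
    using h Rc M S gc by (intro assoc_mult_mat) auto
  finally show ?thesis
    unfolding sheet_min_closure_def using hR inv mult_carrier_mat[OF S gc] by blast
qed

theorem mainTheorem7:
  fixes n :: nat and f :: "complex mat \<Rightarrow> complex" and Z :: "complex mat"
  assumes "n > 3"
    and "f \<in> U22 n"
    and "Z \<in> sheet_min_closure n"
  shows "f Z = 0"
proof -
  obtain k :: nat and c g h
    where gh: "\<forall>i<k. g i \<in> SL n \<and> h i \<in> carrier_mat n n \<and> g i * h i = 1\<^sub>m n"
      and f: "f = (\<lambda>Z. \<Sum>i<k. c i * minor22 n (h i * Z * g i))"
    using assms(2) unfolding U22_def by blast
  have "minor22 n (h i * Z * g i) = 0" if "i < k" for i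
    using gh that assms(1,3) by (simp add: minor22_sheet_min_closure sheet_min_closure_conj)
  then show ?thesis unfolding f by simp
qed

end
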